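(* Let $X$ be a regular one-dimensional generalised diffusion on an interval $I$ with speed measure $m$ and scale function $s$, fix $\rho>0$ and a parameter $\theta$, and write $U(x)=U(x,\theta)=G(x,\theta)-R(x,\theta)$. Let $\Delta_-=\arg\max_{s\in\mathrm{int}(I)}[U(s)/\phi(s)]$ and $\Delta_+=\arg\max_{s\in\mathrm{int}(I)}[U(s)/\varphi(s)]$. If $x\in\Delta_+$ and $y\in\Delta_-$ then $x\le y$.
   Context: $\mathrm{int}(I)$ denotes the interior of $I$ together with its accessible boundary points. Standing boundary assumption: either both endpoints of $I$ are non-reflecting (absorbing or killing), or $X$ starts at a reflecting endpoint and the other endpoint is non-reflecting. $\varphi$ and $\phi$ are respectively the strictly increasing and strictly decreasing positive solutions of $\frac12\frac{d}{dm}\frac{d}{ds}f=\rho f$ (with the boundary conditions of $X$), normalised to equal $1$ at the starting point $X_0$; thus $\mathbb{E}_x[e^{-\rho H_y}]$ equals $\varphi(x)/\varphi(y)$ for $x\le y$ and $\phi(x)/\phi(y)$ for $x\ge y$, where $H_y=\inf\{t:X_t=y\}$. $G$ is a terminal reward, $c$ a running reward with $\mathbb{E}_x[\int_0^\infty e^{-\rho t}|c(X_t,\theta)|dt]<\infty$, and $R(x,\theta)=\mathbb{E}_x[\int_0^\infty e^{-\rho t}c(X_t,\theta)dt]$. Standing assumption: there is $\hat x\in\mathrm{int}(I)$ with $U(\hat x,\theta)>0$. *)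

theory Defs
  imports Complex_Main
begin

definition argmax_on :: "'a set \<Rightarrow> ('a \<Rightarrow> real) \<Rightarrow> 'a set" where
  "argmax_on S f = {s \<in> S. \<forall>t\<in>S. f t \<le> f s}"

end

theory Submission
  imports Defs
begin

text \<open>Suppose y < x. A maximiser of U/w with U positive there (positivity comes from some point
  where U > 0) strictly beats, in U itself, every point where w is smaller. With w = vphi this gives
  U y < U x; with w = phi it gives U x < U y.\<close>

lemma argmax_on_ratio_pos:
  fixes u w :: "'a \<Rightarrow> real"
  assumes "x \<in> argmax_on S (\<lambda>s. u s / w s)"
    and "\<And>s. s \<in> S \<Longrightarrow> w s > 0"
    and "\<exists>s\<in>S. u s > 0"
  shows "u x > 0"
proof -
  obtain s where s: "s \<in> S" "u s > 0" using assms(3) by blast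
  have "0 < u s / w s" using s assms(2) by simp
  also have "\<dots> \<le> u x / w x" using assms(1) s(1) by (simp add: argmax_on_def)
  finally have "0 < u x / w x" .
  moreover have "w x > 0" using assms(1,2) by (simp add: argmax_on_def)
  ultimately show ?thesis by (simp add: zero_less_divide_iff)
qed

lemma argmax_on_ratio_less:
  fixes u w :: "'a \<Rightarrow> real"
  assumes max: "x \<in> argmax_on S (\<lambda>s. u s / w s)"
    and w_pos: "\<And>s. s \<in> S \<Longrightarrow> w s > 0"
    and "u x > 0" and t: "t \<in> S" and "w t < w x"
  shows "u t < u x"
proof -
  have wt: "w t > 0" using w_pos t by simp
  have "u t / w t \<le> u x / w x" using max t by (simp add: argmax_on_def)
  also have "\<dots> < u x / w t" using assms(3,5) wt by (simp add: divide_strict_left_mono)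
  finally show ?thesis using wt by (simp add: divide_less_cancel)
qed

theorem lemma3p4:
  fixes intI :: "real set"
    and G R :: "real \<Rightarrow> 'p \<Rightarrow> real" and \<theta> :: 'p
    and vphi phi :: "real \<Rightarrow> real"
    and x y :: real
  assumes vphi_pos: "\<And>s. s \<in> intI \<Longrightarrow> vphi s > 0"
    and vphi_incr: "strict_mono_on intI vphi"
    and phi_pos: "\<And>s. s \<in> intI \<Longrightarrow> phi s > 0"
    and phi_decr: "\<And>s t. s \<in> intI \<Longrightarrow> t \<in> intI \<Longrightarrow> s < t \<Longrightarrow> phi t < phi s"
    and U_pos: "\<exists>xh\<in>intI. G xh \<theta> - R xh \<theta> > 0"
    and x_in: "x \<in> argmax_on intI (\<lambda>s. (G s \<theta> - R s \<theta>) / vphi s)"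
    and y_in: "y \<in> argmax_on intI (\<lambda>s. (G s \<theta> - R s \<theta>) / phi s)"
  shows "x \<le> y"
proof (rule ccontr)
  assume "\<not> x \<le> y"
  then have "y < x" by simp
  have x: "x \<in> intI" and y: "y \<in> intI" using x_in y_in by (auto simp: argmax_on_def)
  have "G y \<theta> - R y \<theta> < G x \<theta> - R x \<theta>"
  proof (rule argmax_on_ratio_less[OF x_in vphi_pos _ y])
    show "G x \<theta> - R x \<theta> > 0" by (rule argmax_on_ratio_pos[OF x_in vphi_pos U_pos])
    show "vphi y < vphi x" using vphi_incr x y \<open>y < x\<close> by (auto simp: strict_mono_on_def)
  qed
  moreover have "G x \<theta> - R x \<theta> < G y \<theta> - R y \<theta>"
  proof (rule argmax_on_ratio_less[OF y_in phi_pos _ x])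
    show "G y \<theta> - R y \<theta> > 0" by (rule argmax_on_ratio_pos[OF y_in phi_pos U_pos])
    show "phi x < phi y" using phi_decr x y \<open>y < x\<close> by simp
  qed
  ultimately show False by simp
qed

end
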